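(* Let $C\subset\mathbb{R}^n$ be a pointed, $n$-dimensional closed convex cone and $\Omega=S^{n-1}\cap\operatorname{int}C^{\circ}$. Let $\mu$ be a nonzero, finite Borel measure on $\Omega$, and let $(\omega_i)_{i\in\mathbb{N}}$ be compact subsets of $\Omega$ with $\omega_i\subset\operatorname{int}\omega_{i+1}$ and $\bigcup_i\omega_i=\Omega$. Let $\mu_i(\sigma)=\mu(\sigma\cap\omega_i)$ and, for $f\in C^+(\omega_i)$, $L_{\mu_i}(f)=\gamma^n([f])\exp\int_{\omega_i}\log f\,d\mu_i$, where $[f]$ is the Wulff shape associated with $(C,\omega_i,f)$. Then there exists a constant $a>0$ such that $\sup\{L_{\mu_i}(f):f\in C^+(\omega_i)\}>a$ for every $i\in\mathbb{N}$.
   Context: $C^{\circ}=\{x:\langle x,y\rangle\le 0\ \forall y\in C\}$. $C^+(\omega)$ denotes the set of continuous functions $\omega\to(0,\infty)$. For a positive continuous $h$ on a compact $\omega\subset\Omega$, the Wulff shape is $[h]=C\cap\bigcap_{u\in\omega}\{y:\langle y,u\rangle\le -h(u)\}$. $\gamma^n$ is the standard Gaussian probability measure on $\mathbb{R}^n$. *)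

theory Defs
  imports "HOL-Probability.Probability"
begin

definition polar_cone :: "'a::euclidean_space set \<Rightarrow> 'a set" where
  "polar_cone C = {x. \<forall>y\<in>C. inner x y \<le> 0}"

definition pointed :: "'a::euclidean_space set \<Rightarrow> bool" where
  "pointed C \<longleftrightarrow> C \<inter> uminus ` C = {0}"

definition Cplus :: "'a::euclidean_space set \<Rightarrow> ('a \<Rightarrow> real) set" where
  "Cplus \<omega> = {f. continuous_on \<omega> f \<and> (\<forall>u\<in>\<omega>. 0 < f u)}"

definition wulff :: "'a::euclidean_space set \<Rightarrow> 'a set \<Rightarrow> ('a \<Rightarrow> real) \<Rightarrow> 'a set" where
  "wulff C \<omega> h = C \<inter> (\<Inter>u\<in>\<omega>. {y. inner y u \<le> - h u})"

definition gauss_density :: "'a::euclidean_space \<Rightarrow> real" where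
  "gauss_density x = (2 * pi) powr (- real DIM('a) / 2) * exp (- (norm x)\<^sup>2 / 2)"

definition gaussian :: "'a::euclidean_space measure" where
  "gaussian = density lborel (\<lambda>x. ennreal (gauss_density x))"

definition L_fun :: "'a::euclidean_space set \<Rightarrow> 'a measure \<Rightarrow> 'a set \<Rightarrow> ('a \<Rightarrow> real) \<Rightarrow> real" where
  "L_fun C \<mu> \<omega> f = measure gaussian (wulff C \<omega> f) * exp (LINT u:\<omega>|\<mu>. ln (f u))"

end

(*
  It suffices to test the functional with the constant function 1: since log 1 = 0,
  L(1) is the Gaussian measure of the Wulff shape [1]. A full-dimensional convex cone
  contains a ball B(z, 2), and then every unit vector u of the polar cone satisfies
  <z, u> <= -2, so B(z, 1) lies in [1] for every choice of omega. The Gaussian density is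
  everywhere positive, hence half the Gaussian measure of B(z, 1) is a uniform bound.
*)
theory Submission
  imports Defs
begin

lemma gauss_density_eq_prod:
  "gauss_density x = (\<Prod>b\<in>Basis. std_normal_density (x \<bullet> b))"
proof -
  have "1 / sqrt (2 * pi) = (2 * pi) powr (- (1 / 2))"
    by (simp add: powr_minus_divide powr_half_sqrt)
  then have const: "(2 * pi) powr (- real DIM('a) / 2) = (1 / sqrt (2 * pi)) ^ DIM('a)"
    by (simp add: powr_power)
  have "(norm x)\<^sup>2 = (\<Sum>b\<in>Basis. (x \<bullet> b)\<^sup>2)"
    unfolding power2_norm_eq_inner by (subst euclidean_inner) (simp add: power2_eq_square)
  then have "exp (- (norm x)\<^sup>2 / 2) = (\<Prod>b\<in>Basis. exp (- (x \<bullet> b)\<^sup>2 / 2))"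
    by (simp add: exp_sum[symmetric] sum_divide_distrib sum_negf)
  with const show ?thesis
    by (simp add: gauss_density_def std_normal_density_def prod_dividef power_one_over)
qed

lemma gauss_density_pos: "0 < gauss_density x"
  by (simp add: gauss_density_def)

lemma borel_measurable_gauss_density[measurable]: "gauss_density \<in> borel_measurable borel"
  unfolding gauss_density_def by measurable

lemma sets_gaussian[simp]: "sets gaussian = sets borel"
  by (simp add: gaussian_def)

lemma prob_space_gaussian: "prob_space (gaussian :: 'a::euclidean_space measure)"
proof
  have "emeasure (gaussian :: 'a measure) (space gaussian)
      = (\<integral>\<^sup>+x. (\<Prod>b\<in>Basis. ennreal (std_normal_density (x \<bullet> b))) \<partial>(lborel :: 'a measure))"
    by (simp add: gaussian_def emeasure_density gauss_density_eq_prod prod_ennreal prod_nonneg)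
  also have "\<dots> = (\<Prod>b\<in>(Basis :: 'a set). \<integral>\<^sup>+t. ennreal (std_normal_density t) \<partial>lborel)"
    by (rule nn_integral_lborel_prod) auto
  also have "\<dots> = 1"
    by (simp add: nn_integral_eq_integral)
  finally show "emeasure (gaussian :: 'a measure) (space gaussian) = 1" .
qed

lemma finite_measure_gaussian: "finite_measure gaussian"
  using prob_space_gaussian by (rule prob_space.axioms)

lemma null_sets_gaussian: "null_sets gaussian = null_sets lborel"
proof (intro set_eqI)
  fix A :: "'a set"
  have "\<not> gauss_density x \<le> 0" for x :: 'a
    using gauss_density_pos[of x] by simp
  then show "A \<in> null_sets gaussian \<longleftrightarrow> A \<in> null_sets lborel"
    by (auto simp: gaussian_def null_sets_density_iff AE_iff_null_sets ennreal_eq_0_iff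
        intro: null_setsD2 AE_not_in)
qed

lemma measure_gaussian_open_pos:
  assumes "open U" and "U \<noteq> {}"
  shows "0 < measure gaussian U"
proof -
  obtain x e where "0 < e" and ball: "ball x e \<subseteq> U"
    using assms open_contains_ball by blast
  have "ball x e \<notin> null_sets lborel"
    using content_ball_pos[OF \<open>0 < e\<close>, of x] by (auto simp: null_sets_def measure_def)
  then have "emeasure gaussian (ball x e) \<noteq> 0"
    by (auto simp: null_sets_gaussian[symmetric])
  then have "0 < measure gaussian (ball x e)"
    by (simp add: finite_measure.emeasure_eq_measure[OF finite_measure_gaussian]
        zero_less_measure_iff)
  also have "\<dots> \<le> measure gaussian U"
    using ball assms(1) by (intro finite_measure.finite_measure_mono[OF finite_measure_gaussian]) auto
  finally show ?thesis .
qed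

lemma cball_scaleR_subset_cone:
  fixes C :: "'a::real_normed_vector set"
  assumes "cone C" and "cball y r \<subseteq> C" and "0 < t"
  shows "cball (t *\<^sub>R y) (t * r) \<subseteq> C"
proof
  fix x assume x: "x \<in> cball (t *\<^sub>R y) (t * r)"
  have "dist (t *\<^sub>R y) x = norm (t *\<^sub>R (y - x /\<^sub>R t))"
    using \<open>0 < t\<close> by (simp add: dist_norm algebra_simps)
  also have "\<dots> = t * dist y (x /\<^sub>R t)"
    using \<open>0 < t\<close> by (simp add: dist_norm)
  finally have "dist y (x /\<^sub>R t) \<le> r"
    using x \<open>0 < t\<close> by (simp add: mult_le_cancel_left_pos)
  then have "x /\<^sub>R t \<in> C" using assms(2) by auto
  moreover have "x = t *\<^sub>R (x /\<^sub>R t)" using \<open>0 < t\<close> by simp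
  ultimately show "x \<in> C" using assms(1) \<open>0 < t\<close> unfolding cone_def by (metis less_imp_le)
qed

lemma cone_contains_cball:
  fixes C :: "'a::real_normed_vector set"
  assumes "cone C" and "interior C \<noteq> {}" and "0 < R"
  obtains z where "cball z R \<subseteq> C"
proof -
  obtain y r where "0 < r" and "cball y r \<subseteq> C"
    using assms(2) open_interior open_contains_cball interior_subset by (metis equals0I subset_trans)
  then have "cball ((R / r) *\<^sub>R y) ((R / r) * r) \<subseteq> C"
    using assms(1,3) by (intro cball_scaleR_subset_cone) auto
  with \<open>0 < r\<close> show thesis using that by simp
qed

lemma inner_polar_cone_le:
  assumes "cball y r \<subseteq> C" and "u \<in> polar_cone C" and "0 \<le> r"
  shows "inner y u \<le> - r * norm u"
proof (cases "u = 0")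
  case False
  have "y + (r / norm u) *\<^sub>R u \<in> cball y r"
    using False \<open>0 \<le> r\<close> by (simp add: dist_norm)
  then have "inner u (y + (r / norm u) *\<^sub>R u) \<le> 0"
    using assms(1,2) by (auto simp: polar_cone_def)
  then show ?thesis
    using False by (simp add: inner_add_right inner_commute power2_norm_eq_inner[symmetric]
        power2_eq_square)
qed simp

lemma ball_subset_wulff:
  assumes "cball z r \<subseteq> C" and "\<omega> \<subseteq> sphere 0 1 \<inter> polar_cone C"
    and "\<And>u. u \<in> \<omega> \<Longrightarrow> h u \<le> r - s" and "s \<le> r"
  shows "ball z s \<subseteq> wulff C \<omega> h"
proof
  fix x assume x: "x \<in> ball z s"
  then have "x \<in> C" using assms(1,4) by auto
  moreover have "inner x u \<le> - h u" if "u \<in> \<omega>" for u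
  proof -
    have "norm u = 1" and "u \<in> polar_cone C" using that assms(2) by auto
    moreover have "0 \<le> r"
      using x assms(4) zero_le_dist[of z x] unfolding mem_ball by linarith
    ultimately have "inner z u \<le> - r"
      using inner_polar_cone_le[OF assms(1)] by fastforce
    moreover have "inner (x - z) u < s"
      using norm_cauchy_schwarz[of "x - z" u] x \<open>norm u = 1\<close>
      by (simp add: dist_norm norm_minus_commute)
    ultimately show ?thesis using assms(3)[OF that] by (simp add: inner_diff_left)
  qed
  ultimately show "x \<in> wulff C \<omega> h" by (simp add: wulff_def)
qed

lemma closed_wulff: "closed C \<Longrightarrow> closed (wulff C \<omega> h)"
  unfolding wulff_def by (intro closed_Int closed_INT ballI closed_Collect_le continuous_intros)

lemma L_fun_one: "L_fun C \<mu> \<omega> (\<lambda>_. 1) = measure gaussian (wulff C \<omega> (\<lambda>_. 1))"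
  by (simp add: L_fun_def)

theorem lemma7p2:
  fixes C :: "'a::euclidean_space set"
    and \<Omega> :: "'a set"
    and \<mu> :: "'a measure"
    and \<omega> :: "nat \<Rightarrow> 'a set"
  assumes "closed C" and "convex C" and "cone C" and "pointed C"
    and "aff_dim C = int DIM('a)"
    and "\<Omega> = sphere 0 1 \<inter> interior (polar_cone C)"
    and "sets \<mu> = sets (restrict_space borel \<Omega>)"
    and "finite_measure \<mu>"
    and "emeasure \<mu> (space \<mu>) \<noteq> 0"
    and "\<And>i. compact (\<omega> i)"
    and "\<And>i. \<omega> i \<subseteq> \<Omega>"
    and "\<And>i. \<exists>U. openin (top_of_set \<Omega>) U \<and> \<omega> i \<subseteq> U \<and> U \<subseteq> \<omega> (Suc i)"
    and "(\<Union>i. \<omega> i) = \<Omega>"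
  shows "\<exists>a>0. \<forall>i. (SUP f\<in>Cplus (\<omega> i). ereal (L_fun C \<mu> (\<omega> i) f)) > ereal a"
proof -
  have "C \<noteq> {}" using assms(5) by auto
  then have "interior C \<noteq> {}"
    using assms(2,5) by (simp add: interior_rel_interior_gen rel_interior_eq_empty)
  then obtain z where z: "cball z 2 \<subseteq> C"
    by (rule cone_contains_cball[OF assms(3), where R = 2]) auto
  define a where "a = measure gaussian (ball z 1) / 2"
  have "0 < a" using measure_gaussian_open_pos[of "ball z 1"] by (simp add: a_def)
  moreover have "ereal a < (SUP f\<in>Cplus (\<omega> i). ereal (L_fun C \<mu> (\<omega> i) f))" for i
  proof -
    have "\<omega> i \<subseteq> sphere 0 1 \<inter> polar_cone C"
      using assms(6,11) interior_subset by blast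
    then have "ball z 1 \<subseteq> wulff C (\<omega> i) (\<lambda>_. 1)"
      using z by (intro ball_subset_wulff) auto
    then have "measure gaussian (ball z 1) \<le> L_fun C \<mu> (\<omega> i) (\<lambda>_. 1)"
      unfolding L_fun_one using closed_wulff[OF assms(1)]
      by (intro finite_measure.finite_measure_mono[OF finite_measure_gaussian]) auto
    then have "ereal a < ereal (L_fun C \<mu> (\<omega> i) (\<lambda>_. 1))"
      using \<open>0 < a\<close> by (simp add: a_def)
    also have "\<dots> \<le> (SUP f\<in>Cplus (\<omega> i). ereal (L_fun C \<mu> (\<omega> i) f))"
      by (rule SUP_upper) (simp add: Cplus_def)
    finally show ?thesis .
  qed
  ultimately show ?thesis by blast
qed

end
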